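(* Let $(G,k)$ be an instance and let $u,v$ be adjacent large-dense vertices, neither incident to a multi-edge, with $N(u)\cup\{u\}=N(v)\cup\{v\}$. Then every minimum-size feasible solution $X$ satisfies either $\{u,v\}\subseteq X$ or $\{u,v\}\cap X=\emptyset$.
   Context: Graphs are undirected, without self-loops, possibly with multi-edges. $N(v)$ is the set of vertices adjacent to $v$; $\rho(v)$ is the number of unordered pairs $\{u_1,u_2\}\subseteq N(v)$ joined by at least one edge. A vertex $v$ is large-dense if $|N(v)|>7k$ and $\rho(v)> |N(v)|(|N(v)|-1)/4$. A vertex set induces a clique if between any two distinct vertices there is exactly one edge, and a tree if it is connected and acyclic (two parallel edges form a cycle). A feasible solution is $X\subseteq V$, $|X|\le k$, with every component of $G-X$ a clique or a tree. *)

theory Defs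
  imports Complex_Main
begin

(* A finite undirected multigraph without self-loops: vertex set V and an
   edge-multiplicity function m (m x y = number of edges between x and y). *)
definition multigraph :: "'a set \<Rightarrow> ('a \<Rightarrow> 'a \<Rightarrow> nat) \<Rightarrow> bool" where
  "multigraph V m \<longleftrightarrow> finite V \<and> (\<forall>x y. m x y = m y x) \<and> (\<forall>x. m x x = 0)
     \<and> (\<forall>x y. m x y > 0 \<longrightarrow> x \<in> V \<and> y \<in> V)"

definition nbhd :: "'a set \<Rightarrow> ('a \<Rightarrow> 'a \<Rightarrow> nat) \<Rightarrow> 'a \<Rightarrow> 'a set" where
  "nbhd V m v = {u \<in> V. m v u > 0}"

definition rho :: "'a set \<Rightarrow> ('a \<Rightarrow> 'a \<Rightarrow> nat) \<Rightarrow> 'a \<Rightarrow> nat" where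
  "rho V m v = card {{u1, u2} | u1 u2. u1 \<in> nbhd V m v \<and> u2 \<in> nbhd V m v \<and> u1 \<noteq> u2 \<and> m u1 u2 > 0}"

definition large_dense :: "'a set \<Rightarrow> ('a \<Rightarrow> 'a \<Rightarrow> nat) \<Rightarrow> nat \<Rightarrow> 'a \<Rightarrow> bool" where
  "large_dense V m k v \<longleftrightarrow> card (nbhd V m v) > 7 * k \<and>
     real (rho V m v) > real (card (nbhd V m v)) * (real (card (nbhd V m v)) - 1) / 4"

definition on_multi_edge :: "('a \<Rightarrow> 'a \<Rightarrow> nat) \<Rightarrow> 'a \<Rightarrow> bool" where
  "on_multi_edge m v \<longleftrightarrow> (\<exists>w. m v w \<ge> 2)"

definition adj_in :: "('a \<Rightarrow> 'a \<Rightarrow> nat) \<Rightarrow> 'a set \<Rightarrow> ('a \<times> 'a) set" where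
  "adj_in m S = {(x, y). x \<in> S \<and> y \<in> S \<and> m x y > 0}"

definition connected_in :: "('a \<Rightarrow> 'a \<Rightarrow> nat) \<Rightarrow> 'a set \<Rightarrow> bool" where
  "connected_in m S \<longleftrightarrow> S \<noteq> {} \<and> (\<forall>x\<in>S. \<forall>y\<in>S. (x, y) \<in> (adj_in m S)\<^sup>*)"

definition induces_clique :: "('a \<Rightarrow> 'a \<Rightarrow> nat) \<Rightarrow> 'a set \<Rightarrow> bool" where
  "induces_clique m S \<longleftrightarrow> (\<forall>x\<in>S. \<forall>y\<in>S. x \<noteq> y \<longrightarrow> m x y = 1)"

definition simple_cycle_in :: "('a \<Rightarrow> 'a \<Rightarrow> nat) \<Rightarrow> 'a set \<Rightarrow> 'a list \<Rightarrow> bool" where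
  "simple_cycle_in m S xs \<longleftrightarrow> length xs \<ge> 3 \<and> distinct xs \<and> set xs \<subseteq> S
     \<and> (\<forall>i < length xs. m (xs ! i) (xs ! ((i + 1) mod length xs)) > 0)"

(* acyclic induced multigraph: no 2-cycles (parallel edges) and no longer cycles *)
definition acyclic_in :: "('a \<Rightarrow> 'a \<Rightarrow> nat) \<Rightarrow> 'a set \<Rightarrow> bool" where
  "acyclic_in m S \<longleftrightarrow> (\<forall>x\<in>S. \<forall>y\<in>S. m x y \<le> 1) \<and> (\<nexists>xs. simple_cycle_in m S xs)"

definition induces_tree :: "('a \<Rightarrow> 'a \<Rightarrow> nat) \<Rightarrow> 'a set \<Rightarrow> bool" where
  "induces_tree m S \<longleftrightarrow> connected_in m S \<and> acyclic_in m S"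

definition components_minus :: "'a set \<Rightarrow> ('a \<Rightarrow> 'a \<Rightarrow> nat) \<Rightarrow> 'a set \<Rightarrow> 'a set set" where
  "components_minus V m X =
     {C. \<exists>x \<in> V - X. C = {y \<in> V - X. (x, y) \<in> (adj_in m (V - X))\<^sup>*}}"

definition feasible :: "'a set \<Rightarrow> ('a \<Rightarrow> 'a \<Rightarrow> nat) \<Rightarrow> nat \<Rightarrow> 'a set \<Rightarrow> bool" where
  "feasible V m k X \<longleftrightarrow> X \<subseteq> V \<and> card X \<le> k \<and>
     (\<forall>C \<in> components_minus V m X. induces_clique m C \<or> induces_tree m C)"

definition min_feasible :: "'a set \<Rightarrow> ('a \<Rightarrow> 'a \<Rightarrow> nat) \<Rightarrow> nat \<Rightarrow> 'a set \<Rightarrow> bool" where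
  "min_feasible V m k X \<longleftrightarrow> feasible V m k X \<and> (\<forall>Y. feasible V m k Y \<longrightarrow> card X \<le> card Y)"

end

theory Submission
  imports Defs
begin

(* Suppose u is in a minimum solution X but v is not, and let C be the component of G - X
   containing v. Because v is large-dense and |X| <= k, some edge inside N(v) avoids X; it
   closes a triangle with v, so C is not a tree, hence a clique, hence C is contained in
   N[v] = N[u]. As u has only simple edges, putting u back joins it to C alone and keeps
   that component a clique, so X - {u} is a smaller solution. *)

definition component_of :: "('a \<Rightarrow> 'a \<Rightarrow> nat) \<Rightarrow> 'a set \<Rightarrow> 'a \<Rightarrow> 'a set" where
  "component_of m S x = {y \<in> S. (x, y) \<in> (adj_in m S)\<^sup>*}"

definition adj_closed :: "('a \<Rightarrow> 'a \<Rightarrow> nat) \<Rightarrow> 'a set \<Rightarrow> 'a set \<Rightarrow> bool" where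
  "adj_closed m T D \<longleftrightarrow> (\<forall>a\<in>D. \<forall>b\<in>T. m a b > 0 \<longrightarrow> b \<in> D)"

lemma components_minus_eq: "components_minus V m X = component_of m (V - X) ` (V - X)"
  by (auto simp: components_minus_def component_of_def)

lemma component_of_self: "x \<in> S \<Longrightarrow> x \<in> component_of m S x"
  by (simp add: component_of_def)

lemma component_of_subset: "component_of m S x \<subseteq> S"
  by (auto simp: component_of_def)

lemma nbhd_Diff_subset_component_of:
  assumes "v \<in> V - X"
  shows "nbhd V m v - X \<subseteq> component_of m (V - X) v"
proof
  fix y assume "y \<in> nbhd V m v - X"
  then have "(v, y) \<in> adj_in m (V - X)"
    using assms by (auto simp: nbhd_def adj_in_def)
  then show "y \<in> component_of m (V - X) v"
    using \<open>y \<in> nbhd V m v - X\<close> by (auto simp: component_of_def nbhd_def)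
qed

lemma adj_closed_component_of: "adj_closed m S (component_of m S x)"
  unfolding adj_closed_def component_of_def adj_in_def
  by (auto intro: rtrancl_into_rtrancl)

lemma adj_closed_Diff:
  assumes "\<And>x y. m x y = m y x" and "adj_closed m T D"
  shows "adj_closed m T (T - D)"
  using assms unfolding adj_closed_def by (metis Diff_iff)

lemma rtrancl_adj_in_closed:
  assumes "(x, y) \<in> (adj_in m T)\<^sup>*" and "x \<in> D" and "adj_closed m T D"
  shows "y \<in> D \<and> (x, y) \<in> (adj_in m D)\<^sup>*"
  using assms(1)
proof (induction rule: rtrancl_induct)
  case base
  then show ?case using assms(2) by simp
next
  case (step y z)
  then have "z \<in> D" using assms(3) by (auto simp: adj_in_def adj_closed_def)
  with step show ?case by (auto simp: adj_in_def intro: rtrancl_into_rtrancl)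
qed

lemma component_of_adj_closed:
  assumes "D \<subseteq> T" and "x \<in> D" and "adj_closed m T D"
  shows "component_of m T x = component_of m D x"
proof -
  have "(adj_in m D)\<^sup>* \<subseteq> (adj_in m T)\<^sup>*"
    using assms(1) by (intro rtrancl_mono) (auto simp: adj_in_def)
  then show ?thesis
    using rtrancl_adj_in_closed[OF _ assms(2,3)] assms(1) by (auto simp: component_of_def)
qed

lemma component_of_clique:
  assumes "induces_clique m C" and "x \<in> C"
  shows "component_of m C x = C"
proof -
  have "(x, y) \<in> (adj_in m C)\<^sup>*" if "y \<in> C" for y
    using assms that by (cases "x = y") (auto simp: induces_clique_def adj_in_def)
  then show ?thesis by (auto simp: component_of_def)
qed

lemma clique_subset_closed_nbhd:
  assumes "induces_clique m C" and "C \<subseteq> V" and "v \<in> C"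
  shows "C \<subseteq> insert v (nbhd V m v)"
  using assms by (auto simp: induces_clique_def nbhd_def)

lemma induces_clique_insert:
  assumes "\<And>x y. m x y = m y x" and "induces_clique m C"
    and "\<And>y. y \<in> C \<Longrightarrow> y \<noteq> u \<Longrightarrow> m u y = 1"
  shows "induces_clique m (insert u C)"
  unfolding induces_clique_def
proof (intro ballI impI)
  fix x y assume "x \<in> insert u C" "y \<in> insert u C" "x \<noteq> y"
  then consider "x = u" "y \<in> C" | "y = u" "x \<in> C" | "x \<in> C" "y \<in> C"
    by blast
  then show "m x y = 1"
  proof cases
    case 1
    then show ?thesis using assms(3) \<open>x \<noteq> y\<close> by simp
  next
    case 2
    then show ?thesis using assms(1,3) \<open>x \<noteq> y\<close> by metis
  next
    case 3
    then show ?thesis using assms(2) \<open>x \<noteq> y\<close> by (simp add: induces_clique_def)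
  qed
qed

lemma triangle_not_acyclic:
  assumes "\<And>x y. m x y = m y x" and "{a, b, c} \<subseteq> S" and "distinct [a, b, c]"
    and "m a b > 0" and "m b c > 0" and "m a c > 0"
  shows "\<not> acyclic_in m S"
proof -
  have "simple_cycle_in m S [a, b, c]"
    unfolding simple_cycle_in_def
  proof (intro conjI allI impI)
    fix i assume "i < length [a, b, c]"
    then consider "i = 0" | "i = 1" | "i = 2" by force
    then show "m ([a, b, c] ! i) ([a, b, c] ! ((i + 1) mod length [a, b, c])) > 0"
      by cases (use assms in auto)
  qed (use assms(2,3) in auto)
  then show ?thesis by (auto simp: acyclic_in_def)
qed

lemma rho_le_card_hitting_set:
  assumes "finite (nbhd V m v)"
    and "\<And>a b. a \<in> nbhd V m v \<Longrightarrow> b \<in> nbhd V m v \<Longrightarrow> a \<noteq> b \<Longrightarrow> m a b > 0 \<Longrightarrow> a \<in> X \<or> b \<in> X"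
  shows "rho V m v \<le> card (nbhd V m v \<inter> X) * card (nbhd V m v)"
proof -
  define N where "N = nbhd V m v"
  let ?pair = "\<lambda>(a, b). {a, b}"
  have "{{a, b} | a b. a \<in> N \<and> b \<in> N \<and> a \<noteq> b \<and> m a b > 0} \<subseteq> ?pair ` ((N \<inter> X) \<times> N)"
  proof safe
    fix a b assume "a \<in> N" "b \<in> N" "a \<noteq> b" "m a b > 0"
    then consider "(a, b) \<in> (N \<inter> X) \<times> N" | "(b, a) \<in> (N \<inter> X) \<times> N"
      using assms(2) by (auto simp: N_def)
    then show "{a, b} \<in> ?pair ` ((N \<inter> X) \<times> N)"
      by cases (force simp: insert_commute)+
  qed
  then have "rho V m v \<le> card (?pair ` ((N \<inter> X) \<times> N))"
    using assms(1) by (auto simp: rho_def N_def intro!: card_mono)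
  also have "\<dots> \<le> card ((N \<inter> X) \<times> N)"
    by (rule card_image_le) (use assms(1) in \<open>simp add: N_def\<close>)
  finally show ?thesis by (simp add: N_def card_cartesian_product)
qed

lemma large_dense_edge_avoiding:
  assumes "finite V" and "finite X" and "card X \<le> k" and "large_dense V m k v"
  shows "\<exists>a \<in> nbhd V m v - X. \<exists>b \<in> nbhd V m v - X. a \<noteq> b \<and> m a b > 0"
proof (rule ccontr)
  assume no_edge: "\<not> ?thesis"
  define n where "n = card (nbhd V m v)"
  have "finite (nbhd V m v)"
    using assms(1) finite_subset by (auto simp: nbhd_def)
  moreover have "a \<in> X \<or> b \<in> X"
    if "a \<in> nbhd V m v" "b \<in> nbhd V m v" "a \<noteq> b" "m a b > 0" for a b
    using no_edge that by (metis DiffI)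
  ultimately have "rho V m v \<le> card (nbhd V m v \<inter> X) * n"
    unfolding n_def by (rule rho_le_card_hitting_set)
  also have "\<dots> \<le> k * n"
    using card_mono[OF assms(2), of "nbhd V m v \<inter> X"] assms(3) by simp
  finally have "real (rho V m v) \<le> real k * real n"
    by (metis of_nat_le_iff of_nat_mult)
  moreover have "n > 7 * k" and "real (rho V m v) > real n * (real n - 1) / 4"
    using assms(4) by (auto simp: large_dense_def n_def)
  moreover from \<open>n > 7 * k\<close> have "real n * (7 * real k) \<le> real n * (real n - 1)"
    by (intro mult_left_mono) auto
  moreover have "real k * real n * 4 \<le> real n * (7 * real k)"
    by simp
  ultimately show False by linarith
qed

lemma components_minus_Diff_clique_attached:
  assumes sym: "\<And>x y. m x y = m y x"
    and "u \<in> V" and "u \<in> X"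
    and C: "C \<in> components_minus V m X"
    and attached: "\<And>w. w \<in> V - X \<Longrightarrow> m u w > 0 \<Longrightarrow> w \<in> C"
    and clique: "induces_clique m (insert u C)"
  shows "components_minus V m (X - {u}) \<subseteq> insert (insert u C) (components_minus V m X)"
proof
  define S where "S = V - X"
  have S': "V - (X - {u}) = insert u S"
    using \<open>u \<in> V\<close> by (auto simp: S_def)
  obtain c where "C = component_of m S c"
    using C by (auto simp: components_minus_eq S_def)
  then have CS: "C \<subseteq> S" and C_closed: "adj_closed m S C"
    by (simp_all add: component_of_subset adj_closed_component_of)
  have C'_closed: "adj_closed m (insert u S) (insert u C)"
    using C_closed attached unfolding adj_closed_def S_def by blast
  fix D assume "D \<in> components_minus V m (X - {u})"
  then have "D \<in> component_of m (insert u S) ` insert u S"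
    by (simp only: components_minus_eq S')
  then obtain x where x: "x \<in> insert u S" and D: "D = component_of m (insert u S) x"
    by blast
  show "D \<in> insert (insert u C) (components_minus V m X)"
  proof (cases "x \<in> insert u C")
    case True
    have "D = component_of m (insert u C) x"
      unfolding D using CS by (intro component_of_adj_closed True C'_closed) auto
    also have "\<dots> = insert u C"
      by (rule component_of_clique[OF clique True])
    finally show ?thesis by simp
  next
    case False
    (* S - C has no edges into C or to u, so it is closed in both S and insert u S. *)
    then have xSC: "x \<in> S - C" using x by blast
    have SC: "insert u S - insert u C = S - C"
      using \<open>u \<in> X\<close> by (auto simp: S_def)
    have "D = component_of m (S - C) x"
      using component_of_adj_closed[OF _ _ adj_closed_Diff[OF sym C'_closed], of x] xSC
      unfolding D SC by blast
    also have "\<dots> = component_of m S x"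
      using component_of_adj_closed[OF _ _ adj_closed_Diff[OF sym C_closed], of x] xSC by blast
    finally show ?thesis
      using xSC by (auto simp: components_minus_eq S_def)
  qed
qed

lemma feasible_Diff_clique_attached:
  assumes sym: "\<And>x y. m x y = m y x"
    and feas: "feasible V m k X" and "u \<in> X"
    and C: "C \<in> components_minus V m X"
    and attached: "\<And>w. w \<in> V - X \<Longrightarrow> m u w > 0 \<Longrightarrow> w \<in> C"
    and clique: "induces_clique m (insert u C)"
  shows "feasible V m k (X - {u})"
proof -
  have "u \<in> V"
    using feas \<open>u \<in> X\<close> by (auto simp: feasible_def)
  then have "components_minus V m (X - {u}) \<subseteq> insert (insert u C) (components_minus V m X)"
    by (rule components_minus_Diff_clique_attached[OF sym _ \<open>u \<in> X\<close> C attached clique])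
  moreover have "X - {u} \<subseteq> V" and "card (X - {u}) \<le> k"
    using feas card_Diff1_le[of X u] by (auto simp: feasible_def)
  ultimately show ?thesis
    using feas clique unfolding feasible_def by blast
qed

lemma feasible_component_of_large_dense_clique:
  assumes mg: "multigraph V m" and feas: "feasible V m k X"
    and "v \<in> V" and "v \<notin> X" and "large_dense V m k v"
  shows "induces_clique m (component_of m (V - X) v)"
proof -
  have sym: "\<And>x y. m x y = m y x" and "finite V" and "m v v = 0"
    using mg by (auto simp: multigraph_def)
  have "X \<subseteq> V" and "card X \<le> k"
    and comps: "\<And>C. C \<in> components_minus V m X \<Longrightarrow> induces_clique m C \<or> induces_tree m C"
    using feas by (auto simp: feasible_def)
  then have "finite X" using \<open>finite V\<close> finite_subset by blast
  define N where "N = nbhd V m v"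
  define C where "C = component_of m (V - X) v"
  have C_comp: "C \<in> components_minus V m X"
    using \<open>v \<in> V\<close> \<open>v \<notin> X\<close> unfolding C_def components_minus_eq by blast
  have "v \<in> C" and NX_C: "N - X \<subseteq> C"
    using \<open>v \<in> V\<close> \<open>v \<notin> X\<close> nbhd_Diff_subset_component_of[of v V X m]
    unfolding C_def N_def by (simp_all add: component_of_self)
  obtain a b where "a \<in> N - X" "b \<in> N - X" "a \<noteq> b" "m a b > 0"
    using large_dense_edge_avoiding[OF \<open>finite V\<close> \<open>finite X\<close> \<open>card X \<le> k\<close> \<open>large_dense V m k v\<close>]
    unfolding N_def by blast
  moreover have "v \<notin> N" using \<open>m v v = 0\<close> by (simp add: N_def nbhd_def)
  ultimately have triangle: "{v, a, b} \<subseteq> C" "distinct [v, a, b]" "m v a > 0" "m v b > 0"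
    using NX_C \<open>v \<in> C\<close> by (auto simp: N_def nbhd_def)
  have "\<not> acyclic_in m C"
    by (rule triangle_not_acyclic[OF sym triangle(1-3) \<open>m a b > 0\<close> triangle(4)])
  then show ?thesis
    using comps[OF C_comp] by (auto simp: induces_tree_def C_def)
qed

lemma induces_clique_insert_twin:
  assumes "\<And>x y. m x y = m y x" and "\<not> on_multi_edge m u"
    and nb: "insert u (nbhd V m u) = insert v (nbhd V m v)"
    and "induces_clique m C" and "C \<subseteq> V" and "v \<in> C" and "u \<notin> C"
  shows "induces_clique m (insert u C)"
proof (rule induces_clique_insert[OF assms(1,4)])
  fix y assume "y \<in> C"
  have "C \<subseteq> insert v (nbhd V m v)"
    using assms(4-6) by (rule clique_subset_closed_nbhd)
  with \<open>y \<in> C\<close> \<open>u \<notin> C\<close> nb have "m u y > 0"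
    by (auto simp: nbhd_def)
  moreover have "\<not> 2 \<le> m u y"
    using \<open>\<not> on_multi_edge m u\<close> unfolding on_multi_edge_def by blast
  ultimately show "m u y = 1" by simp
qed

lemma min_feasible_twins_not_separated:
  assumes mg: "multigraph V m" and "v \<in> V"
    and "large_dense V m k v" and "\<not> on_multi_edge m u"
    and nb: "insert u (nbhd V m u) = insert v (nbhd V m v)"
    and mf: "min_feasible V m k X" and "u \<in> X" and "v \<notin> X"
  shows False
proof -
  have sym: "\<And>x y. m x y = m y x" and "finite V"
    using mg by (auto simp: multigraph_def)
  have feas: "feasible V m k X"
    using mf by (simp add: min_feasible_def)
  then have "finite X"
    using \<open>finite V\<close> finite_subset by (auto simp: feasible_def)
  define C where "C = component_of m (V - X) v"
  have C_comp: "C \<in> components_minus V m X"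
    using \<open>v \<in> V\<close> \<open>v \<notin> X\<close> unfolding C_def components_minus_eq by blast
  have "v \<in> C" and "C \<subseteq> V - X" and NX_C: "nbhd V m v - X \<subseteq> C"
    using \<open>v \<in> V\<close> \<open>v \<notin> X\<close> nbhd_Diff_subset_component_of[of v V X m]
    unfolding C_def by (simp_all add: component_of_self component_of_subset)
  have "induces_clique m C"
    unfolding C_def by (rule feasible_component_of_large_dense_clique) (use assms feas in auto)
  then have "induces_clique m (insert u C)"
    using \<open>C \<subseteq> V - X\<close> \<open>v \<in> C\<close> \<open>u \<in> X\<close>
    by (intro induces_clique_insert_twin[OF sym \<open>\<not> on_multi_edge m u\<close> nb]) auto
  moreover have "w \<in> C" if "w \<in> V - X" and "m u w > 0" for w
  proof -
    have "w \<in> insert v (nbhd V m v)" using that nb by (auto simp: nbhd_def)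
    then show ?thesis using \<open>v \<in> C\<close> NX_C that(1) by auto
  qed
  ultimately have "feasible V m k (X - {u})"
    by (intro feasible_Diff_clique_attached[OF sym feas \<open>u \<in> X\<close> C_comp])
  then have "card X \<le> card (X - {u})"
    using mf by (simp add: min_feasible_def)
  then show False
    using card_Diff1_less[OF \<open>finite X\<close> \<open>u \<in> X\<close>] by simp
qed

theorem mainTheorem14:
  fixes V :: "'a set" and m :: "'a \<Rightarrow> 'a \<Rightarrow> nat" and k :: nat and u v :: 'a and X :: "'a set"
  assumes "multigraph V m"
    and "u \<in> V" and "v \<in> V" and "m u v > 0"
    and "large_dense V m k u" and "large_dense V m k v"
    and "\<not> on_multi_edge m u" and "\<not> on_multi_edge m v"
    and "insert u (nbhd V m u) = insert v (nbhd V m v)"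
    and "min_feasible V m k X"
  shows "{u, v} \<subseteq> X \<or> {u, v} \<inter> X = {}"
proof -
  have "\<not> (u \<in> X \<and> v \<notin> X)"
    using min_feasible_twins_not_separated[OF assms(1,3,6,7,9,10)] by blast
  moreover have "\<not> (v \<in> X \<and> u \<notin> X)"
    using min_feasible_twins_not_separated[OF assms(1,2,5,8) assms(9)[symmetric] assms(10)] by blast
  ultimately show ?thesis by blast
qed

end
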